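(* For any $T,n,m\in\mathbb{N}_+$ there exist a constant $C(n)$ depending only on $n$, reals $\alpha_1,\dots,\alpha_m$ and $\beta_1,\dots,\beta_m>1$ such that, with $\phi(t;B)=\sum_{k=1}^m\alpha_k(t/B)^{-\beta_k}$, $$\max_{1\le B\le T}\ \sum_{t=1}^\infty\big|\mathbb{I}\{t=B\}-\phi(t;B)\big|\le\frac{C(n)T^{1.01(n+1)}}{m^n},$$ where the maximum is over integers $B$.
   Context: $\mathbb{I}\{\cdot\}$ denotes the indicator function. *)

theory Defs
  imports Complex_Main
begin

definition phi :: "nat \<Rightarrow> (nat \<Rightarrow> real) \<Rightarrow> (nat \<Rightarrow> real) \<Rightarrow> real \<Rightarrow> real \<Rightarrow> real" where
  "phi m \<alpha> \<beta> B t = (\<Sum>k=1..m. \<alpha> k * (t / B) powr (- \<beta> k))"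

text \<open>The summand |I{t=B} - phi(t;B)| for t = Suc i, i.e. t ranging over 1,2,3,...\<close>
definition err_term :: "nat \<Rightarrow> (nat \<Rightarrow> real) \<Rightarrow> (nat \<Rightarrow> real) \<Rightarrow> nat \<Rightarrow> nat \<Rightarrow> real" where
  "err_term m \<alpha> \<beta> B i =
     \<bar>(if Suc i = B then 1 else 0) - phi m \<alpha> \<beta> (real B) (real (Suc i))\<bar>"

end

theory Submission
  imports Defs "HOL-Analysis.Gamma_Function" "HOL-Computational_Algebra.Polynomial"
begin

text \<open>With \<open>g = 1 / (1 + ln T)\<close> and exponents \<open>\<beta>\<^sub>k = 2 + g (k - 1)\<close>, the substitution
  \<open>x = (B / t) powr g\<close> turns \<open>\<phi>(t; B)\<close> into \<open>(B / t)^2 P(x)\<close>, where \<open>P\<close> is the polynomial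
  of degree \<open>< m\<close> with coefficients \<open>\<alpha>\<^sub>k\<close>. The term \<open>t = B\<close> gives \<open>x = 1\<close>, while for \<open>t \<noteq> B\<close>
  the point \<open>x\<close> lies in \<open>(0, e]\<close> at distance at least \<open>d = g / (2 (T + 1))\<close> from \<open>1\<close>.
  A Chebyshev polynomial of degree \<open>K = (m - 1) div 2\<close>, composed with a quadratic and
  normalised by \<open>P(1) = 1\<close>, is bounded by \<open>2 / (1 + d)^K\<close> at all those points, and the factor
  \<open>(B / t)^2\<close> makes the error series converge to at most \<open>6 T^2 / (1 + d)^K\<close>.
  As \<open>1 / d = O(T log T)\<close> and \<open>log T \<le> 100 T^0.01\<close>, this exponential decay in \<open>m\<close> is
  below \<open>C(n) T^(1.01 (n + 1)) / m^n\<close> whenever that bound is below \<open>1\<close>; otherwise the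
  weights \<open>\<alpha> = 0\<close> already have error exactly \<open>1\<close>.\<close>

fun cheb_poly :: "nat \<Rightarrow> real poly" where
  "cheb_poly 0 = 1"
| "cheb_poly (Suc 0) = [:0, 1:]"
| "cheb_poly (Suc (Suc n)) = smult 2 ([:0, 1:] * cheb_poly (Suc n)) - cheb_poly n"

lemma degree_cheb_poly_le: "degree (cheb_poly n) \<le> n"
proof (induction n rule: cheb_poly.induct)
  case (3 n)
  have "degree (smult 2 ([:0, 1:] * cheb_poly (Suc n))) \<le> Suc (Suc n)"
    using degree_mult_le[of "[:0, 1:]" "cheb_poly (Suc n)"] 3 by auto
  moreover have "degree (cheb_poly n) \<le> Suc (Suc n)"
    using 3 by auto
  ultimately show ?case
    unfolding cheb_poly.simps by (rule degree_diff_le)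
qed auto

lemma poly_cheb_poly_cos: "poly (cheb_poly n) (cos t) = cos (real n * t)"
proof (induction n rule: cheb_poly.induct)
  case (3 n)
  have "cos (real (Suc (Suc n)) * t) = 2 * cos t * cos (real (Suc n) * t) - cos (real n * t)"
    using cos_add[of "real (Suc n) * t" t] cos_diff[of "real (Suc n) * t" t]
    by (simp add: algebra_simps)
  then show ?case
    using 3 by simp
qed auto

lemma abs_poly_cheb_poly_le_1:
  assumes "\<bar>x\<bar> \<le> 1"
  shows "\<bar>poly (cheb_poly n) x\<bar> \<le> 1"
proof -
  have "poly (cheb_poly n) x = cos (real n * arccos x)"
    using poly_cheb_poly_cos[of n "arccos x"] assms by (simp add: cos_arccos_abs)
  then show ?thesis
    by simp
qed

lemma poly_cheb_poly_mean_inverse: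
  assumes "w \<noteq> 0"
  shows "poly (cheb_poly n) ((w + inverse w) / 2) = (w ^ n + inverse w ^ n) / 2"
proof (induction n rule: cheb_poly.induct)
  case (3 n)
  have "w * inverse w = 1"
    using assms by simp
  then have "(w + inverse w) * (w ^ Suc n + inverse w ^ Suc n)
      = w ^ Suc (Suc n) + inverse w ^ Suc (Suc n) + (w ^ n + inverse w ^ n)"
    by (simp add: power_Suc algebra_simps) (metis mult.assoc mult.left_commute mult_1)
  then show ?case
    using 3 by (simp add: field_simps)
qed auto

lemma poly_cheb_poly_one_plus_ge:
  assumes "h \<ge> 0"
  shows "(1 + sqrt (2 * h)) ^ n / 2 \<le> poly (cheb_poly n) (1 + h)"
proof -
  define s where "s = sqrt (2 * h + h\<^sup>2)"
  define w where "w = 1 + h + s"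
  have "s \<ge> 0" "s\<^sup>2 = 2 * h + h\<^sup>2"
    using assms by (simp_all add: s_def)
  then have w_pos: "w > 0" and "w * (1 + h - s) = 1"
    using assms by (auto simp: w_def algebra_simps power2_eq_square)
  then have "inverse w = 1 + h - s"
    by (metis inverse_unique)
  then have "(w + inverse w) / 2 = 1 + h"
    by (simp add: w_def)
  then have mean: "poly (cheb_poly n) (1 + h) = (w ^ n + inverse w ^ n) / 2"
    using poly_cheb_poly_mean_inverse[of w n] w_pos by (metis less_irrefl)
  have "1 + sqrt (2 * h) \<le> w"
    using assms real_sqrt_le_mono[of "2 * h" "2 * h + h\<^sup>2"] by (simp add: w_def s_def add_increasing)
  then have "(1 + sqrt (2 * h)) ^ n / 2 \<le> w ^ n / 2"
    using assms by (simp add: power_mono)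
  also have "\<dots> \<le> poly (cheb_poly n) (1 + h)"
    unfolding mean using w_pos by simp
  finally show ?thesis .
qed

text \<open>The quadratic \<open>Q\<close> maps \<open>1\<close> to \<open>1 + h\<close>, just outside \<open>[-1, 1]\<close>, and the rest of
  \<open>[-1, 3]\<close> outside \<open>(1 - d, 1 + d)\<close> into \<open>[-1, 1]\<close>; composing with a Chebyshev polynomial
  and normalising at \<open>1\<close> turns the exponential growth there into exponential smallness elsewhere.\<close>
lemma peaked_poly_exists:
  fixes d :: real and K :: nat
  assumes "0 \<le> d"
  obtains P :: "real poly"
  where "degree P \<le> 2 * K" and "poly P 1 = 1"
    and "\<And>x. d \<le> \<bar>x - 1\<bar> \<Longrightarrow> \<bar>x - 1\<bar> \<le> 2 \<Longrightarrow> \<bar>poly P x\<bar> \<le> 2 / (1 + d) ^ K"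
proof
  define h where "h = d\<^sup>2 / 2"
  define Q :: "real poly" where "Q = pcompose [:1 + h, -(2 + h) / 4:] ([:-1, 1:] ^ 2)"
  define D where "D = poly (cheb_poly K) (1 + h)"
  define P where "P = smult (1 / D) (pcompose (cheb_poly K) Q)"
  have poly_Q: "poly Q x = 1 + h - (2 + h) / 4 * (x - 1)\<^sup>2" for x
    by (simp add: Q_def poly_pcompose power2_eq_square field_simps)
  have poly_P: "poly P x = poly (cheb_poly K) (poly Q x) / D" for x
    by (simp add: P_def poly_pcompose)
  have "(1 + d) ^ K / 2 \<le> D"
    using poly_cheb_poly_one_plus_ge[of h K] assms by (simp add: D_def h_def)
  moreover have "0 < (1 + d) ^ K"
    using assms by simp
  ultimately have D_pos: "0 < D" and inverse_D_le: "1 / D \<le> 2 / (1 + d) ^ K"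
    by (simp_all add: field_simps)
  have "degree Q \<le> 1 * 2"
    unfolding Q_def degree_pcompose using degree_power_le[of "[:-1, 1:] :: real poly" 2]
    by (intro mult_le_mono) auto
  have "degree P \<le> degree (cheb_poly K) * degree Q"
    unfolding P_def by (metis degree_pcompose degree_smult_le)
  also have "\<dots> \<le> K * 2"
    using degree_cheb_poly_le \<open>degree Q \<le> 1 * 2\<close> by (intro mult_le_mono) auto
  finally show "degree P \<le> 2 * K"
    by simp
  show "poly P 1 = 1"
    using D_pos by (simp add: poly_P poly_Q D_def)
  fix x :: real
  assume "d \<le> \<bar>x - 1\<bar>" and "\<bar>x - 1\<bar> \<le> 2"
  then have "d\<^sup>2 \<le> \<bar>x - 1\<bar>\<^sup>2" and "\<bar>x - 1\<bar>\<^sup>2 \<le> 2\<^sup>2"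
    using assms by (meson power_mono abs_ge_zero)+
  then have "d\<^sup>2 \<le> (x - 1)\<^sup>2" and "(x - 1)\<^sup>2 \<le> 4"
    by simp_all
  moreover have "0 \<le> (2 + h) / 4"
    by (simp add: h_def)
  ultimately have "(2 + h) / 4 * d\<^sup>2 \<le> (2 + h) / 4 * (x - 1)\<^sup>2"
    and "(2 + h) / 4 * (x - 1)\<^sup>2 \<le> (2 + h) / 4 * 4"
    by (meson mult_left_mono)+
  moreover have "h \<le> (2 + h) / 4 * d\<^sup>2"
    by (simp add: h_def field_simps)
  ultimately have "\<bar>poly Q x\<bar> \<le> 1"
    unfolding poly_Q by (simp add: abs_le_iff)
  then have "\<bar>poly P x\<bar> \<le> 1 / D"
    using D_pos abs_poly_cheb_poly_le_1 by (simp add: poly_P divide_right_mono)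
  with inverse_D_le show "\<bar>poly P x\<bar> \<le> 2 / (1 + d) ^ K"
    by linarith
qed

lemma abs_exp_minus_one_ge:
  fixes a y :: real
  assumes "0 \<le> a" and "a \<le> 1" and "a \<le> \<bar>y\<bar>"
  shows "a / 2 \<le> \<bar>exp y - 1\<bar>"
proof (cases "0 \<le> y")
  case True
  then show ?thesis
    using assms exp_ge_add_one_self[of y] by linarith
next
  case False
  then have "exp y \<le> exp (- a)"
    using assms by simp
  also have "\<dots> \<le> 1 / (1 + a)"
    using exp_ge_add_one_self[of a] assms by (simp add: exp_minus divide_simps)
  also have "\<dots> \<le> 1 - a / 2"
    using assms mult_left_mono[of a 1 a] by (simp add: field_simps)
  finally show ?thesis
    by linarith
qed

lemma abs_ln_nat_ratio_ge:
  fixes B t :: nat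
  assumes "1 \<le> B" and "1 \<le> t" and "t \<noteq> B"
  shows "1 / (real B + 1) \<le> \<bar>ln (real B / real t)\<bar>"
proof (cases "t < B")
  case True
  have "ln (real t / real B) \<le> real t / real B - 1"
    using assms by (intro ln_le_minus_one) auto
  also have "\<dots> = (real t - real B) / real B"
    using assms(1) by (simp add: field_simps)
  also have "\<dots> \<le> - 1 / real B"
    using True by (intro divide_right_mono) auto
  also have "\<dots> \<le> - 1 / (real B + 1)"
    using assms by (simp add: field_simps)
  finally show ?thesis
    using assms by (simp add: ln_div)
next
  case False
  then have "real B + 1 \<le> real t"
    using assms by simp
  have "ln (real B / real t) \<le> real B / real t - 1"
    using assms by (intro ln_le_minus_one) auto
  also have "real B / real t \<le> real B / (real B + 1)"
    using \<open>real B + 1 \<le> real t\<close> assms by (intro divide_left_mono) auto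
  also have "real B / (real B + 1) - 1 = - 1 / (real B + 1)"
    by (simp add: field_simps)
  finally show ?thesis
    by simp
qed

lemma nat_ratio_powr_distance_one:
  fixes T B t :: nat
  defines "g \<equiv> 1 / (1 + ln (real T))"
  assumes B_ge: "1 \<le> B" and B_le: "B \<le> T" and t_ge: "1 \<le> t" and t_ne: "t \<noteq> B"
  shows "g / (2 * (real T + 1)) \<le> \<bar>(real B / real t) powr g - 1\<bar>"
    and "\<bar>(real B / real t) powr g - 1\<bar> \<le> 2"
proof -
  have ln_T: "0 \<le> ln (real T)"
    using B_ge B_le by simp
  then have g_pos: "0 < g" and g_le_1: "g \<le> 1"
    by (simp_all add: g_def)
  have ratio_pos: "0 < real B / real t"
    using B_ge t_ge by simp
  have powr_eq: "(real B / real t) powr g = exp (g * ln (real B / real t))"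
    using B_ge t_ge by (simp add: powr_def)
  define a where "a = g / (real T + 1)"
  have "a \<le> g / (real B + 1)"
    unfolding a_def using B_le g_pos by (intro divide_left_mono) auto
  also have "\<dots> \<le> \<bar>g * ln (real B / real t)\<bar>"
    using mult_left_mono[OF abs_ln_nat_ratio_ge[OF B_ge t_ge t_ne], of g] g_pos
    by (simp add: abs_mult)
  finally have "a / 2 \<le> \<bar>exp (g * ln (real B / real t)) - 1\<bar>"
    using g_pos g_le_1 by (intro abs_exp_minus_one_ge) (auto simp: a_def field_simps)
  then show "g / (2 * (real T + 1)) \<le> \<bar>(real B / real t) powr g - 1\<bar>"
    unfolding powr_eq a_def by (simp add: field_simps)
  have "real B / real t \<le> real B / 1"
    using t_ge by (intro divide_left_mono) auto
  then have "real B / real t \<le> real T"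
    using B_le by simp
  then have "(real B / real t) powr g \<le> real T powr g"
    using g_pos ratio_pos by (intro powr_mono2) auto
  also have "\<dots> = exp (ln (real T) / (1 + ln (real T)))"
    using B_ge B_le by (simp add: powr_def g_def)
  also have "\<dots> \<le> exp 1"
    using ln_T by simp
  finally show "\<bar>(real B / real t) powr g - 1\<bar> \<le> 2"
    using exp_le powr_ge_zero[of "real B / real t" g] by linarith
qed

lemma phi_coeff_powr_eq:
  fixes P :: "real poly" and g B t :: real
  assumes deg_P: "degree P < m" and "0 < B" and "0 < t"
  shows "phi m (\<lambda>k. coeff P (k - 1)) (\<lambda>k. 2 + g * real (k - 1)) B t
    = (B / t)\<^sup>2 * poly P ((B / t) powr g)"
proof -
  have "(t / B) powr (- (2 + g * real j)) = (B / t)\<^sup>2 * ((B / t) powr g) ^ j" for j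
  proof -
    have "(t / B) powr (- (2 + g * real j)) = (B / t) powr (2 + g * real j)"
      using assms unfolding powr_minus by (simp add: powr_divide)
    also have "\<dots> = (B / t) powr 2 * (B / t) powr (g * real j)"
      by (simp add: powr_add)
    also have "(B / t) powr (g * real j) = ((B / t) powr g) powr (real j)"
      by (simp add: powr_powr)
    also have "\<dots> = ((B / t) powr g) ^ j"
      using assms by (intro powr_realpow) simp
    finally show ?thesis
      using assms by (simp add: powr_numeral)
  qed
  then have "phi m (\<lambda>k. coeff P (k - 1)) (\<lambda>k. 2 + g * real (k - 1)) B t
      = (B / t)\<^sup>2 * (\<Sum>j<m. coeff P j * ((B / t) powr g) ^ j)"
    unfolding phi_def by (simp add: sum.atLeast1_atMost_eq sum_distrib_left algebra_simps)
  also have "(\<Sum>j<m. coeff P j * ((B / t) powr g) ^ j) = poly P ((B / t) powr g)"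
    unfolding poly_altdef using deg_P
    by (intro sum.mono_neutral_right) (auto simp: coeff_eq_0)
  finally show ?thesis .
qed

lemma err_term_poly_le:
  fixes P :: "real poly" and T B :: nat and \<epsilon> :: real
  defines "g \<equiv> 1 / (1 + ln (real T))"
  assumes deg_P: "degree P < m" and P_1: "poly P 1 = 1" and B_ge: "1 \<le> B" and B_le: "B \<le> T"
    and \<epsilon>_nonneg: "0 \<le> \<epsilon>"
    and P_small: "\<And>x. g / (2 * (real T + 1)) \<le> \<bar>x - 1\<bar> \<Longrightarrow> \<bar>x - 1\<bar> \<le> 2 \<Longrightarrow> \<bar>poly P x\<bar> \<le> \<epsilon>"
  shows "err_term m (\<lambda>k. coeff P (k - 1)) (\<lambda>k. 2 + g * real (k - 1)) B i
    \<le> (real B / real (Suc i))\<^sup>2 * \<epsilon>"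
proof -
  define x where "x = (real B / real (Suc i)) powr g"
  have phi_eq: "phi m (\<lambda>k. coeff P (k - 1)) (\<lambda>k. 2 + g * real (k - 1)) (real B) (real (Suc i))
      = (real B / real (Suc i))\<^sup>2 * poly P x"
    unfolding x_def using deg_P B_ge by (intro phi_coeff_powr_eq) auto
  show ?thesis
  proof (cases "Suc i = B")
    case True
    then have "x = 1"
      by (simp add: x_def)
    then show ?thesis
      unfolding err_term_def phi_eq using True P_1 \<epsilon>_nonneg by simp
  next
    case False
    then have "\<bar>poly P x\<bar> \<le> \<epsilon>"
      unfolding x_def g_def
      using B_ge B_le by (intro P_small[unfolded g_def] nat_ratio_powr_distance_one) auto
    then show ?thesis
      unfolding err_term_def phi_eq using False by (simp add: abs_mult mult_left_mono)
  qed
qed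

lemma err_term_poly_sum_le:
  fixes P :: "real poly" and T B :: nat and \<epsilon> :: real
  defines "g \<equiv> 1 / (1 + ln (real T))"
  assumes deg_P: "degree P < m" and P_1: "poly P 1 = 1" and B_ge: "1 \<le> B" and B_le: "B \<le> T"
    and \<epsilon>_nonneg: "0 \<le> \<epsilon>"
    and P_small: "\<And>x. g / (2 * (real T + 1)) \<le> \<bar>x - 1\<bar> \<Longrightarrow> \<bar>x - 1\<bar> \<le> 2 \<Longrightarrow> \<bar>poly P x\<bar> \<le> \<epsilon>"
  shows "summable (err_term m (\<lambda>k. coeff P (k - 1)) (\<lambda>k. 2 + g * real (k - 1)) B)"
    and "(\<Sum>i. err_term m (\<lambda>k. coeff P (k - 1)) (\<lambda>k. 2 + g * real (k - 1)) B i)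
      \<le> 3 * \<epsilon> * (real T)\<^sup>2"
proof -
  let ?err = "err_term m (\<lambda>k. coeff P (k - 1)) (\<lambda>k. 2 + g * real (k - 1)) B"
  define c where "c = \<epsilon> * (real B)\<^sup>2"
  have bound_sums: "(\<lambda>i. c * (1 / (1 + real i)\<^sup>2)) sums (c * (pi\<^sup>2 / 6))"
    using inverse_squares_sums by (intro sums_mult) (simp add: add.commute)
  have err_le: "?err i \<le> c * (1 / (1 + real i)\<^sup>2)" for i
  proof -
    have "?err i \<le> (real B / real (Suc i))\<^sup>2 * \<epsilon>"
      unfolding g_def by (rule err_term_poly_le[OF deg_P P_1 B_ge B_le \<epsilon>_nonneg P_small[unfolded g_def]])
    also have "\<dots> = c * (1 / (1 + real i)\<^sup>2)"
      by (simp add: c_def power_divide)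
    finally show ?thesis .
  qed
  have err_nonneg: "0 \<le> ?err i" for i
    by (simp add: err_term_def)
  show summable: "summable ?err"
    by (rule summable_comparison_test[OF _ sums_summable[OF bound_sums]])
      (use err_le err_nonneg in auto)
  have "(\<Sum>i. ?err i) \<le> (\<Sum>i. c * (1 / (1 + real i)\<^sup>2))"
    by (rule suminf_le[OF err_le summable sums_summable[OF bound_sums]])
  also have "\<dots> = c * (pi\<^sup>2 / 6)"
    by (rule sums_unique[OF bound_sums, symmetric])
  also have "\<dots> \<le> \<epsilon> * (real T)\<^sup>2 * 3"
    unfolding c_def
  proof (intro mult_mono mult_left_mono)
    show "(real B)\<^sup>2 \<le> (real T)\<^sup>2"
      using B_le by (intro power_mono) auto
    have "pi\<^sup>2 \<le> 4\<^sup>2"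
      using pi_less_4 by (intro power_mono) auto
    then show "pi\<^sup>2 / 6 \<le> 3"
      by simp
  qed (use \<epsilon>_nonneg in auto)
  finally show "(\<Sum>i. ?err i) \<le> 3 * \<epsilon> * (real T)\<^sup>2"
    by (simp add: mult_ac)
qed

lemma exists_weights_err_sum_le:
  fixes T m :: nat
  defines "d \<equiv> 1 / ((1 + ln (real T)) * (2 * (real T + 1)))"
  assumes T: "1 \<le> T" and m: "1 \<le> m"
  shows "\<exists>\<alpha> \<beta>. (\<forall>k\<in>{1..m}. 1 < \<beta> k) \<and> (\<forall>B. 1 \<le> B \<and> B \<le> T \<longrightarrow>
    summable (err_term m \<alpha> \<beta> B) \<and>
    (\<Sum>i. err_term m \<alpha> \<beta> B i) \<le> 6 * (real T)\<^sup>2 / (1 + d) ^ ((m - 1) div 2))"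
proof -
  define g where "g = 1 / (1 + ln (real T))"
  define K where "K = (m - 1) div 2"
  have "0 \<le> ln (real T)"
    using T by simp
  then have g_pos: "0 < g" and d_eq: "d = g / (2 * (real T + 1))"
    by (simp_all add: g_def d_def)
  then have d_nonneg: "0 \<le> d"
    by simp
  obtain P :: "real poly" where deg_P: "degree P \<le> 2 * K" and P_1: "poly P 1 = 1"
    and P_small: "\<And>x. d \<le> \<bar>x - 1\<bar> \<Longrightarrow> \<bar>x - 1\<bar> \<le> 2 \<Longrightarrow> \<bar>poly P x\<bar> \<le> 2 / (1 + d) ^ K"
    using peaked_poly_exists[OF d_nonneg, of K] by blast
  have "degree P < m"
    using deg_P m by (simp add: K_def)
  have eps_nonneg: "0 \<le> 2 / (1 + d) ^ K"
    using d_nonneg by simp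
  have P_small_g: "\<bar>poly P x\<bar> \<le> 2 / (1 + d) ^ K"
    if "g / (2 * (real T + 1)) \<le> \<bar>x - 1\<bar>" and "\<bar>x - 1\<bar> \<le> 2" for x
    using P_small that d_eq by simp
  note sum_le = err_term_poly_sum_le[OF \<open>degree P < m\<close> P_1 _ _ eps_nonneg P_small_g[unfolded g_def]]
  show ?thesis
  proof (intro exI conjI ballI allI impI)
    show "1 < 2 + g * real (k - 1)" for k
      using g_pos by (simp add: add_pos_nonneg)
    fix B :: nat
    assume "1 \<le> B \<and> B \<le> T"
    then have "1 \<le> B" and "B \<le> T"
      by simp_all
    show "summable (err_term m (\<lambda>k. coeff P (k - 1)) (\<lambda>k. 2 + g * real (k - 1)) B)"
      unfolding g_def by (rule sum_le(1)[OF \<open>1 \<le> B\<close> \<open>B \<le> T\<close>])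
    have "(\<Sum>i. err_term m (\<lambda>k. coeff P (k - 1)) (\<lambda>k. 2 + g * real (k - 1)) B i)
        \<le> 3 * (2 / (1 + d) ^ K) * (real T)\<^sup>2"
      unfolding g_def by (rule sum_le(2)[OF \<open>1 \<le> B\<close> \<open>B \<le> T\<close>])
    then show "(\<Sum>i. err_term m (\<lambda>k. coeff P (k - 1)) (\<lambda>k. 2 + g * real (k - 1)) B i)
        \<le> 6 * (real T)\<^sup>2 / (1 + d) ^ ((m - 1) div 2)"
      by (simp add: K_def)
  qed
qed

lemma power_div_fact_le_exp:
  fixes z :: real
  assumes "0 \<le> z"
  shows "z ^ N / fact N \<le> exp z"
proof -
  have exp_sums: "(\<lambda>k. z ^ k / fact k) sums exp z"
    using exp_converges[of z] by (simp add: divide_inverse mult.commute)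
  have "(\<Sum>k\<in>{N}. z ^ k / fact k) \<le> (\<Sum>k. z ^ k / fact k)"
    using exp_sums assms by (intro sum_le_suminf) (auto simp: sums_summable)
  then show ?thesis
    using sums_unique[OF exp_sums] by simp
qed

lemma power_div_fact_le_one_plus_power:
  fixes d :: real
  assumes "0 \<le> d" and "d \<le> 1 / 2"
  shows "(real K * d / 2) ^ N / fact N \<le> (1 + d) ^ K"
proof -
  have "d / 2 \<le> d - d\<^sup>2"
    using assms mult_left_mono[of "2 * d" 1 d] by (simp add: power2_eq_square)
  also have "\<dots> \<le> ln (1 + d)"
    using assms by (intro ln_one_plus_pos_lower_bound) auto
  finally have "exp (d / 2) \<le> 1 + d"
    using assms by (metis exp_le_cancel_iff exp_ln add_pos_nonneg zero_less_one)
  have "(real K * d / 2) ^ N / fact N \<le> exp (real K * (d / 2))"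
    using power_div_fact_le_exp[of "real K * (d / 2)" N] assms by simp
  also have "\<dots> = exp (d / 2) ^ K"
    by (rule exp_of_nat_mult)
  also have "\<dots> \<le> (1 + d) ^ K"
    using \<open>exp (d / 2) \<le> 1 + d\<close> by (intro power_mono) auto
  finally show ?thesis .
qed

lemma one_plus_ln_mult_le:
  fixes X :: real
  assumes "1 \<le> X"
  shows "(1 + ln X) * (2 * (X + 1)) \<le> 404 * X powr 1.01"
proof -
  have "1 \<le> X powr 0.01"
    using assms by (simp add: ge_one_powr_ge_zero)
  moreover have "ln X \<le> 100 * X powr 0.01"
    using ln_powr_bound[OF assms, of "0.01"] by simp
  ultimately have ln_le: "1 + ln X \<le> 101 * X powr 0.01"
    by linarith
  have "2 * (X + 1) \<le> 4 * X"
    using assms by simp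
  then have "(1 + ln X) * (2 * (X + 1)) \<le> 101 * X powr 0.01 * (4 * X)"
    by (rule mult_mono[OF ln_le]) (use assms in auto)
  also have "\<dots> = 404 * X powr 1.01"
    using assms powr_add[of X 1 "0.01"] by simp
  finally show ?thesis .
qed

lemma one_plus_inverse_ln_power_ge:
  fixes X :: real and m N :: nat
  assumes X: "1 \<le> X" and m: "3 \<le> m"
  shows "(real m / (4848 * X powr 1.01)) ^ N / fact N
    \<le> (1 + 1 / ((1 + ln X) * (2 * (X + 1)))) ^ ((m - 1) div 2)"
proof -
  define Y where "Y = X powr 1.01"
  define d where "d = 1 / ((1 + ln X) * (2 * (X + 1)))"
  define K where "K = (m - 1) div 2"
  have Y_pos: "0 < Y"
    using X by (simp add: Y_def)
  have "m \<le> 6 * K"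
    using m unfolding K_def by linarith
  then have K_ge: "real m / 6 \<le> real K"
    by simp
  have D_ge: "1 * 4 \<le> (1 + ln X) * (2 * (X + 1))"
    using X by (intro mult_mono) auto
  then have d_pos: "0 < d" and d_le: "d \<le> 1 / 2"
    unfolding d_def by (simp_all add: divide_simps)
  have "0 < 404 * Y * ((1 + ln X) * (2 * (X + 1)))"
    using Y_pos D_ge by simp
  then have d_ge: "1 / (404 * Y) \<le> d"
    unfolding d_def using one_plus_ln_mult_le[OF X, folded Y_def] by (intro divide_left_mono) auto
  have "real m / 6 * (1 / (404 * Y)) \<le> real K * d"
    by (rule mult_mono[OF K_ge d_ge]) (use Y_pos in auto)
  then have "real m / (4848 * Y) \<le> real K * d / 2"
    using Y_pos by (simp add: field_simps)
  then have "(real m / (4848 * Y)) ^ N / fact N \<le> (real K * d / 2) ^ N / fact N"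
    using Y_pos by (intro divide_right_mono power_mono) auto
  also have "\<dots> \<le> (1 + d) ^ K"
    by (rule power_div_fact_le_one_plus_power) (use d_pos d_le in auto)
  finally show ?thesis
    unfolding Y_def d_def K_def .
qed

lemma decay_le_power_bound:
  fixes X :: real and m n :: nat
  defines "C \<equiv> 6 * fact (2 * n) * 4848 ^ (2 * n)"
  assumes X: "1 \<le> X" and big: "C * X powr (1.01 * real (n + 1)) < real m ^ n"
  shows "6 * X\<^sup>2 / (1 + 1 / ((1 + ln X) * (2 * (X + 1)))) ^ ((m - 1) div 2)
    \<le> C * X powr (1.01 * real (n + 1)) / real m ^ n"
proof -
  define Y where "Y = X powr 1.01"
  define D where "D = (1 + 1 / ((1 + ln X) * (2 * (X + 1)))) ^ ((m - 1) div 2)"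
  define M where "M = real m"
  have "X \<le> Y"
    using X powr_mono[of 1 "1.01" X] by (simp add: Y_def)
  then have Y_pos: "0 < Y"
    using X by linarith
  have "X powr (1.01 * real (n + 1)) = Y powr real (n + 1)"
    by (simp add: Y_def powr_powr)
  also have "\<dots> = Y ^ (n + 1)"
    using Y_pos by (rule powr_realpow)
  finally have X_powr: "X powr (1.01 * real (n + 1)) = Y ^ (n + 1)" .
  have fact_ge: "1 \<le> 6 * (fact (2 * n) :: real)"
    using fact_ge_1[of "2 * n", where 'a = real] by linarith
  have "(3::real) ^ n \<le> 4848 ^ n"
    by (intro power_mono) auto
  also have "\<dots> \<le> 4848 ^ (2 * n)"
    by (intro power_increasing) auto
  also have "\<dots> \<le> C"
    using fact_ge by (simp add: C_def mult_le_cancel_right1)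
  finally have "(3::real) ^ n \<le> C" .
  then have C_ge_1: "1 \<le> C"
    using one_le_power[of "3 :: real" n] by linarith
  have "1 \<le> Y ^ (n + 1)"
    using \<open>X \<le> Y\<close> X by (intro one_le_power) linarith
  then have "Y ^ (n + 1) \<le> C * Y ^ (n + 1)" and "C \<le> C * Y ^ (n + 1)"
    using mult_right_mono[OF C_ge_1, of "Y ^ (n + 1)"] mult_left_mono[of 1 "Y ^ (n + 1)" C] C_ge_1
    by simp_all
  moreover have "C * Y ^ (n + 1) < M ^ n"
    using big unfolding X_powr M_def .
  ultimately have Y_M: "Y ^ (n + 1) \<le> M ^ n" and "3 ^ n < M ^ n"
    using \<open>3 ^ n \<le> C\<close> by linarith+
  have "3 < M"
    using \<open>3 ^ n < M ^ n\<close> by (rule power_less_imp_less_base) (simp add: M_def)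
  then have decay: "(M / (4848 * Y)) ^ (2 * n) / fact (2 * n) \<le> D"
    unfolding M_def Y_def D_def by (intro one_plus_inverse_ln_power_ge X) simp
  have z_pos: "0 < (M / (4848 * Y)) ^ (2 * n) / fact (2 * n)"
    using \<open>3 < M\<close> Y_pos by simp
  have "X\<^sup>2 * Y ^ (2 * n) \<le> Y\<^sup>2 * Y ^ (2 * n)"
    using \<open>X \<le> Y\<close> X by (intro mult_right_mono power_mono) auto
  also have "\<dots> = Y ^ (n + 1) * Y ^ (n + 1)"
    unfolding power_add[symmetric] by (rule arg_cong[of _ _ "(^) Y"]) simp
  finally have XY: "X\<^sup>2 * Y ^ (2 * n) \<le> Y ^ (n + 1) * Y ^ (n + 1)" .
  have "6 * X\<^sup>2 / D \<le> 6 * X\<^sup>2 / ((M / (4848 * Y)) ^ (2 * n) / fact (2 * n))"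
    using decay z_pos less_le_trans[OF z_pos decay] by (intro divide_left_mono mult_pos_pos) auto
  also have "\<dots> = C * (X\<^sup>2 * Y ^ (2 * n)) / (M ^ n * M ^ n)"
    using \<open>3 < M\<close> Y_pos
    by (simp add: C_def power_divide power_mult_distrib field_simps flip: power_add mult_2)
  also have "\<dots> \<le> C * (Y ^ (n + 1) * Y ^ (n + 1)) / (M ^ n * M ^ n)"
    using XY C_ge_1 by (intro divide_right_mono mult_left_mono) auto
  also have "\<dots> = C * Y ^ (n + 1) / M ^ n * (Y ^ (n + 1) / M ^ n)"
    by simp
  also have "\<dots> \<le> C * Y ^ (n + 1) / M ^ n * 1"
    using Y_M C_ge_1 Y_pos \<open>3 < M\<close> by (intro mult_left_mono) auto
  finally show ?thesis
    unfolding X_powr M_def D_def by simp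
qed

lemma err_term_zero_weights_sums:
  assumes "1 \<le> B"
  shows "err_term m (\<lambda>_. 0) \<beta> B sums 1"
proof -
  have "err_term m (\<lambda>_. 0) \<beta> B = (\<lambda>i. if i = B - 1 then 1 else 0)"
    using assms by (auto simp: err_term_def phi_def fun_eq_iff)
  then show ?thesis
    using sums_single[of "B - 1" "\<lambda>_. 1 :: real"] by simp
qed

lemma exists_weights_err_sum_le_power_bound:
  fixes n T m :: nat
  defines "C \<equiv> 6 * fact (2 * n) * 4848 ^ (2 * n)"
  assumes T: "1 \<le> T" and m: "1 \<le> m"
  shows "\<exists>\<alpha> \<beta>. (\<forall>k\<in>{1..m}. 1 < \<beta> k) \<and> (\<forall>B. 1 \<le> B \<and> B \<le> T \<longrightarrow>
    summable (err_term m \<alpha> \<beta> B) \<and>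
    (\<Sum>i. err_term m \<alpha> \<beta> B i) \<le> C * real T powr (1.01 * real (n + 1)) / real m ^ n)"
proof (cases "C * real T powr (1.01 * real (n + 1)) < real m ^ n")
  case True
  then have "6 * (real T)\<^sup>2 / (1 + 1 / ((1 + ln (real T)) * (2 * (real T + 1)))) ^ ((m - 1) div 2)
      \<le> C * real T powr (1.01 * real (n + 1)) / real m ^ n"
    using T unfolding C_def by (intro decay_le_power_bound) auto
  with exists_weights_err_sum_le[OF T m] show ?thesis
    by (meson order.trans)
next
  case False
  then have "1 \<le> C * real T powr (1.01 * real (n + 1)) / real m ^ n"
    using m by (simp add: field_simps)
  then show ?thesis
    using err_term_zero_weights_sums[of _ m "\<lambda>_. 2"]
    by (intro exI[of _ "\<lambda>_. 0"] exI[of _ "\<lambda>_. 2"]) (auto simp: sums_iff)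
qed

theorem lemmaF5:
  shows "\<forall>n::nat. n \<ge> 1 \<longrightarrow> (\<exists>C::real. \<forall>T m::nat. T \<ge> 1 \<longrightarrow> m \<ge> 1 \<longrightarrow>
     (\<exists>\<alpha> \<beta> :: nat \<Rightarrow> real. (\<forall>k\<in>{1..m}. \<beta> k > 1) \<and>
        (\<forall>B::nat. 1 \<le> B \<and> B \<le> T \<longrightarrow>
           summable (err_term m \<alpha> \<beta> B) \<and>
           (\<Sum>i. err_term m \<alpha> \<beta> B i) \<le> C * real T powr (1.01 * real (n + 1)) / real m ^ n)))"
  using exists_weights_err_sum_le_power_bound by blast

end
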